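(* Consider the algorithm described in the context. Suppose: (i) $\|\hat H_k\|\leq\kappa_H$ for all $k$, some $\kappa_H\geq1$; (ii) $f$ is bounded below by $f_{\mathrm{low}}$, twice continuously differentiable with $L_H$-Lipschitz Hessian, and $\|\nabla^2 f(\mathbf{x}_k)\|\leq M$ for all $k$; (iii) every step satisfies $\hat{m}_k(\mathbf{0}) - \hat{m}_k(\hat{\mathbf{s}}_k) \geq \kappa_s \max\left(\|\hat{\mathbf{g}}_k\| \min\left(\Delta_k, \frac{\|\hat{\mathbf{g}}_k\|}{\max(\|\hat{H}_k\|,1)}\right), \hat{\tau}^m_k\Delta_k^2\right)$ for some $\kappa_s>0$. Let $\epsilon>0$ with $\theta := (1-\alpha)^2 - \frac{4M(r-1)\alpha^2}{\epsilon(1-\alpha)^2}>0$, and let $K\geq0$. If $\sigma_k\geq\epsilon$ for all $k\leq K$, then $$\#(\mathcal{D}(\gamma_{\mathrm{dec}}^{-1}\Delta)\cap\mathcal{U})\leq c_3\cdot\#(\mathcal{D}(\gamma_{\mathrm{inc}}^{-1}\Delta)\cap\mathcal{S})+c_4(\Delta)\quad\text{for all }\Delta\leq\Delta_0,$$ and $$\#(\mathcal{D}^C(\gamma_{\mathrm{inc}}^{-1}\Delta)\cap\mathcal{S})\leq c_3^{-1}\cdot\#(\mathcal{D}^C(\gamma_{\mathrm{dec}}^{-1}\Delta)\cap\mathcal{U})\quad\text{for all }\Delta\leq\min(\Delta_0,\gamma_{\mathrm{inc}}^{-1}\Delta_{\max}),$$ where $c_3:=\frac{\log(\gamma_{\mathrm{inc}})}{\log(\gamma_{\mathrm{dec}}^{-1})}$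 and $c_4(\Delta):=\frac{\log(\Delta_0/\Delta)}{\log(\gamma_{\mathrm{dec}}^{-1})}$.
   Context: Algorithm: Let $f:\mathbb{R}^n\to\mathbb{R}$. Fix $\mathbf{x}_0$, $p\in\{1,\ldots,n\}$, $0<\Delta_0\leq\Delta_{\max}$, $0<\gamma_{\mathrm{dec}}<1<\gamma_{\mathrm{inc}}$, $\eta\in(0,1)$, $\mu>0$. For $k=0,1,\ldots$: select a random $P_k\in\mathbb{R}^{n\times p}$; build $\hat m_k(\hat{\mathbf{s}})=f(\mathbf{x}_k)+\hat{\mathbf{g}}_k^T\hat{\mathbf{s}}+\frac12\hat{\mathbf{s}}^T\hat H_k\hat{\mathbf{s}}$ ($\hat H_k$ symmetric) which is $P_k$-fully quadratic: constants $\kappa_{\mathrm{ef}},\kappa_{\mathrm{eg}},\kappa_{\mathrm{eh}}>0$ independent of $k$ with $|f(\mathbf{x}_k+P_k\hat{\mathbf{s}})-\hat m_k(\hat{\mathbf{s}})|\leq\kappa_{\mathrm{ef}}\Delta_k^3$, $\|P_k^T\nabla f(\mathbf{x}_k+P_k\hat{\mathbf{s}})-\nabla\hat m_k(\hat{\mathbf{s}})\|\leq\kappa_{\mathrm{eg}}\Delta_k^2$, $\|P_k^T\nabla^2 f(\mathbf{x}_k+P_k\hat{\mathbf{s}})P_k-\hat H_k\|\leq\kappa_{\mathrm{eh}}\Delta_k$ for all $\|\hat{\mathbf{s}}\|\leq\Delta_k$; compute a step $\hat{\mathbf{s}}_k$ with $\|\hat{\mathbf{s}}_k\|\leq\Delta_k$;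 let $R_k:=\frac{f(\mathbf{x}_k)-f(\mathbf{x}_k+P_k\hat{\mathbf{s}}_k)}{\hat m_k(\mathbf{0})-\hat m_k(\hat{\mathbf{s}}_k)}$, $\hat\tau^m_k:=\max(-\lambda_{\min}(\hat H_k),0)$, $\hat\sigma^m_k:=\max(\|\hat{\mathbf{g}}_k\|,\hat\tau^m_k)$; if $R_k\geq\eta$ and $\hat\sigma^m_k\geq\mu\Delta_k$ the iteration is successful: $\mathbf{x}_{k+1}=\mathbf{x}_k+P_k\hat{\mathbf{s}}_k$, $\Delta_{k+1}=\min(\gamma_{\mathrm{inc}}\Delta_k,\Delta_{\max})$; otherwise unsuccessful: $\mathbf{x}_{k+1}=\mathbf{x}_k$, $\Delta_{k+1}=\gamma_{\mathrm{dec}}\Delta_k$. Criticality: $\sigma_k:=\max(\|\nabla f(\mathbf{x}_k)\|,\max(-\lambda_{\min}(\nabla^2 f(\mathbf{x}_k)),0))$. $\alpha\in(0,1)$ is the well-alignment parameter (a matrix $P_k$ is well-aligned if $\|P_k\|\leq P_{\max}$, $\|P_k^T\nabla f(\mathbf{x}_k)\|\geq(1-\alpha)\|\nabla f(\mathbf{x}_k)\|$, $\|\hat{\mathbf{v}}_r\|\geq1-\alpha$, $(\hat{\mathbf{v}}_i^T\hat{\mathbf{v}}_r)^2\leq4\alpha^2$ for $i<r$, where $\nabla^2 f(\mathbf{x}_k)=\sum_{i=1}^r\lambda_i\mathbf{v}_i\mathbf{v}_i^T$ with $\lambda_1\geq\cdots\geq\lambda_r$, $r=\operatorname{rank}(\nabla^2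 f(\mathbf{x}_k))$, orthonormal $\mathbf{v}_i$, and $\hat{\mathbf{v}}_i=P_k^T\mathbf{v}_i$); $r$ in $\theta$ is this rank. Index sets, for fixed $K$: $\mathcal{S}$ (resp. $\mathcal{U}$) = successful (resp. unsuccessful) iterations in $\{0,\ldots,K\}$; $\mathcal{D}(\Delta)$ (resp. $\mathcal{D}^C(\Delta)$) = iterations in $\{0,\ldots,K\}$ with $\Delta_k\geq\Delta$ (resp. $\Delta_k<\Delta$); $\#$ denotes cardinality. *)

theory Defs
  imports "HOL-Analysis.Analysis"
begin

definition opnorm :: "real^'m^'n \<Rightarrow> real" where
  "opnorm A = onorm (\<lambda>v. A *v v)"

text \<open>Real eigenvalues of a square matrix and the smallest one
  (used for symmetric matrices, where all eigenvalues are real).\<close>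
definition eigvals :: "real^'n^'n \<Rightarrow> real set" where
  "eigvals A = {l. \<exists>v. v \<noteq> 0 \<and> A *v v = l *\<^sub>R v}"

definition lambda_min :: "real^'n^'n \<Rightarrow> real" where
  "lambda_min A = Min (eigvals A)"

definition qmodel :: "real \<Rightarrow> real^'p \<Rightarrow> real^'p^'p \<Rightarrow> real^'p \<Rightarrow> real" where
  "qmodel fx g H s = fx + g \<bullet> s + (1/2) * (s \<bullet> (H *v s))"

definition tau_m :: "real^'p^'p \<Rightarrow> real" where
  "tau_m H = max (- lambda_min H) 0"

definition sigma_m :: "real^'p \<Rightarrow> real^'p^'p \<Rightarrow> real" where
  "sigma_m g H = max (norm g) (tau_m H)"

definition crit :: "real^'n \<Rightarrow> real^'n^'n \<Rightarrow> real" where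
  "crit gr Hs = max (norm gr) (max (- lambda_min Hs) 0)"

definition ratio :: "(real^'n \<Rightarrow> real) \<Rightarrow> real^'n \<Rightarrow> real^'p^'n \<Rightarrow> real^'p \<Rightarrow> real^'p^'p \<Rightarrow> real^'p \<Rightarrow> real" where
  "ratio f x P g H s =
     (f x - f (x + P *v s)) / (qmodel (f x) g H 0 - qmodel (f x) g H s)"

definition successful :: "real \<Rightarrow> real \<Rightarrow> (real^'n \<Rightarrow> real) \<Rightarrow> real^'n \<Rightarrow> real^'p^'n
     \<Rightarrow> real^'p \<Rightarrow> real^'p^'p \<Rightarrow> real^'p \<Rightarrow> real \<Rightarrow> bool" where
  "successful \<eta> \<mu> f x P g H s \<Delta> \<longleftrightarrow> ratio f x P g H s \<ge> \<eta> \<and> sigma_m g H \<ge> \<mu> * \<Delta>"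

end

theory Submission
  imports Defs
begin

text \<open>In logarithmic scale the radius moves up by at
  most \<open>ln \<gamma>inc\<close> at a successful iteration and down by exactly \<open>ln (1/\<gamma>dec)\<close> at an
  unsuccessful one. For a threshold \<open>t\<close>, the potential \<open>max (ln \<Delta>\<^sub>k) t\<close> falls by
  \<open>ln (1/\<gamma>dec)\<close> at every unsuccessful iteration with a large radius and can rise only at
  successful ones, by at most \<open>ln \<gamma>inc\<close>. Symmetrically, \<open>min (ln \<Delta>\<^sub>k) t\<close> rises by
  \<open>ln \<gamma>inc\<close> at every successful iteration with a small radius (the cap \<open>\<Delta>max\<close> is not reached
  when \<open>t \<le> ln (\<Delta>max / \<gamma>inc)\<close>) and can fall only at unsuccessful ones, by at most
  \<open>ln (1/\<gamma>dec)\<close>. Telescoping either potential compares the two counts.\<close>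

lemma telescoping_count_le:
  fixes \<phi> :: "nat \<Rightarrow> real"
  assumes "\<And>k. \<phi> (Suc k) + (if A k then a else 0) \<le> \<phi> k + (if B k then b else 0)"
  shows "\<phi> N + a * card {k \<in> {..<N}. A k} \<le> \<phi> 0 + b * card {k \<in> {..<N}. B k}"
proof -
  have step: "\<phi> (Suc k) - \<phi> k \<le> (if B k then b else 0) - (if A k then a else 0)" for k
    using assms[of k] by linarith
  have "\<phi> N - \<phi> 0 = (\<Sum>k<N. \<phi> (Suc k) - \<phi> k)"
    by (rule sum_lessThan_telescope[symmetric])
  also have "\<dots> \<le> (\<Sum>k<N. (if B k then b else 0) - (if A k then a else 0))"
    using step by (rule sum_mono)
  also have "\<dots> = b * card {k \<in> {..<N}. B k} - a * card {k \<in> {..<N}. A k}"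
    by (simp add: sum_subtractf sum.inter_filter[symmetric] mult.commute)
  finally show ?thesis by simp
qed

lemma log_walk_count_upper:
  fixes \<rho> :: "nat \<Rightarrow> real"
  assumes "0 \<le> a" "0 \<le> b"
    and up: "\<And>k. Sc k \<Longrightarrow> \<rho> (Suc k) \<le> \<rho> k + a"
    and down: "\<And>k. \<not> Sc k \<Longrightarrow> \<rho> (Suc k) \<le> \<rho> k - b"
  shows "t + b * card {k \<in> {..<N}. t + b \<le> \<rho> k \<and> \<not> Sc k}
    \<le> max (\<rho> 0) t + a * card {k \<in> {..<N}. t - a \<le> \<rho> k \<and> Sc k}"
proof -
  have "max (\<rho> (Suc k)) t + (if t + b \<le> \<rho> k \<and> \<not> Sc k then b else 0)
      \<le> max (\<rho> k) t + (if t - a \<le> \<rho> k \<and> Sc k then a else 0)" for k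
    using assms(1-2) up[of k] down[of k] by (cases "Sc k") (auto simp: max_def)
  then have "max (\<rho> N) t + b * card {k \<in> {..<N}. t + b \<le> \<rho> k \<and> \<not> Sc k}
    \<le> max (\<rho> 0) t + a * card {k \<in> {..<N}. t - a \<le> \<rho> k \<and> Sc k}"
    by (rule telescoping_count_le)
  then show ?thesis by linarith
qed

lemma log_walk_count_lower:
  fixes \<rho> :: "nat \<Rightarrow> real"
  assumes "0 \<le> a" "0 \<le> b" "t + a \<le> c"
    and up: "\<And>k. Sc k \<Longrightarrow> min (\<rho> k + a) c \<le> \<rho> (Suc k)"
    and down: "\<And>k. \<not> Sc k \<Longrightarrow> \<rho> k - b \<le> \<rho> (Suc k)"
  shows "min (\<rho> 0) t + a * card {k \<in> {..<N}. \<rho> k < t - a \<and> Sc k}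
    \<le> t + b * card {k \<in> {..<N}. \<rho> k < t + b \<and> \<not> Sc k}"
proof -
  have "- min (\<rho> (Suc k)) t + (if \<rho> k < t - a \<and> Sc k then a else 0)
      \<le> - min (\<rho> k) t + (if \<rho> k < t + b \<and> \<not> Sc k then b else 0)" for k
    using assms(1-3) up[of k] down[of k]
    by (cases "Sc k") (auto simp: min_def split: if_splits)
  then have "- min (\<rho> N) t + a * card {k \<in> {..<N}. \<rho> k < t - a \<and> Sc k}
    \<le> - min (\<rho> 0) t + b * card {k \<in> {..<N}. \<rho> k < t + b \<and> \<not> Sc k}"
    by (rule telescoping_count_le)
  then show ?thesis by linarith
qed

locale trust_region_radius =
  fixes D :: "nat \<Rightarrow> real" and Sc :: "nat \<Rightarrow> bool" and \<gamma>dec \<gamma>inc Dmax :: real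
  assumes \<gamma>dec: "0 < \<gamma>dec" "\<gamma>dec < 1" and \<gamma>inc: "1 < \<gamma>inc"
    and D0_pos: "0 < D 0" and Dmax_pos: "0 < Dmax"
    and D_update: "\<And>k. D (Suc k) = (if Sc k then min (\<gamma>inc * D k) Dmax else \<gamma>dec * D k)"
begin

lemma D_pos: "0 < D k"
  by (induction k) (use D0_pos Dmax_pos \<gamma>dec \<gamma>inc D_update in auto)

lemma ln_D_successful:
  assumes "Sc k"
  shows "ln (D (Suc k)) = min (ln (D k) + ln \<gamma>inc) (ln Dmax)"
proof -
  have pos: "0 < \<gamma>inc * D k"
    using D_pos[of k] \<gamma>inc by simp
  then have "ln (D k) + ln \<gamma>inc = ln (\<gamma>inc * D k)"
    using D_pos[of k] \<gamma>inc by (simp add: ln_mult)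
  then show ?thesis
    using assms pos Dmax_pos D_update[of k] by (simp add: min_def)
qed

lemma ln_D_unsuccessful: "\<not> Sc k \<Longrightarrow> ln (D (Suc k)) = ln (D k) - ln (1 / \<gamma>dec)"
  using D_pos[of k] \<gamma>dec D_update[of k] by (simp add: ln_mult ln_div)

lemma count_large_unsuccessful_le:
  assumes d: "0 < d" "d \<le> D 0"
  shows "real (card {k \<in> {0..K}. D k \<ge> d / \<gamma>dec \<and> \<not> Sc k})
    \<le> (ln \<gamma>inc / ln (1 / \<gamma>dec))
        * real (card {k \<in> {0..K}. D k \<ge> d / \<gamma>inc \<and> Sc k})
      + ln (D 0 / d) / ln (1 / \<gamma>dec)"
proof -
  let ?U = "{k \<in> {0..K}. D k \<ge> d / \<gamma>dec \<and> \<not> Sc k}"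
  let ?S = "{k \<in> {0..K}. D k \<ge> d / \<gamma>inc \<and> Sc k}"
  have "ln (d / \<gamma>dec) = ln d + ln (1 / \<gamma>dec)" "ln (d / \<gamma>inc) = ln d - ln \<gamma>inc"
    using d \<gamma>dec \<gamma>inc by (simp_all add: ln_div)
  then have "{k \<in> {..<Suc K}. ln d + ln (1 / \<gamma>dec) \<le> ln (D k) \<and> \<not> Sc k} = ?U"
    and "{k \<in> {..<Suc K}. ln d - ln \<gamma>inc \<le> ln (D k) \<and> Sc k} = ?S"
    using d D_pos \<gamma>dec \<gamma>inc
    by (auto simp flip: \<open>ln (d / \<gamma>dec) = _\<close> \<open>ln (d / \<gamma>inc) = _\<close>)
  moreover have "ln d + ln (1 / \<gamma>dec)
      * card {k \<in> {..<Suc K}. ln d + ln (1 / \<gamma>dec) \<le> ln (D k) \<and> \<not> Sc k}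
    \<le> max (ln (D 0)) (ln d)
      + ln \<gamma>inc * card {k \<in> {..<Suc K}. ln d - ln \<gamma>inc \<le> ln (D k) \<and> Sc k}"
    by (rule log_walk_count_upper) (use \<gamma>dec \<gamma>inc ln_D_successful ln_D_unsuccessful in auto)
  moreover have "max (ln (D 0)) (ln d) = ln d + ln (D 0 / d)"
    using d D0_pos by (simp add: ln_div)
  ultimately have "ln (1 / \<gamma>dec) * card ?U \<le> ln \<gamma>inc * card ?S + ln (D 0 / d)"
    by simp
  moreover have "0 < ln (1 / \<gamma>dec)"
    using \<gamma>dec by simp
  ultimately show ?thesis
    by (simp add: field_simps)
qed

lemma count_small_successful_le:
  assumes d: "0 < d" "d \<le> D 0" "d \<le> Dmax / \<gamma>inc"
  shows "real (card {k \<in> {0..K}. D k < d / \<gamma>inc \<and> Sc k})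
    \<le> (ln (1 / \<gamma>dec) / ln \<gamma>inc)
        * real (card {k \<in> {0..K}. D k < d / \<gamma>dec \<and> \<not> Sc k})"
proof -
  let ?S = "{k \<in> {0..K}. D k < d / \<gamma>inc \<and> Sc k}"
  let ?U = "{k \<in> {0..K}. D k < d / \<gamma>dec \<and> \<not> Sc k}"
  have "ln (d / \<gamma>inc) = ln d - ln \<gamma>inc" "ln (d / \<gamma>dec) = ln d + ln (1 / \<gamma>dec)"
    using d \<gamma>dec \<gamma>inc by (simp_all add: ln_div)
  then have "{k \<in> {..<Suc K}. ln (D k) < ln d - ln \<gamma>inc \<and> Sc k} = ?S"
    and "{k \<in> {..<Suc K}. ln (D k) < ln d + ln (1 / \<gamma>dec) \<and> \<not> Sc k} = ?U"
    using d D_pos \<gamma>dec \<gamma>inc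
    by (auto simp flip: \<open>ln (d / \<gamma>dec) = _\<close> \<open>ln (d / \<gamma>inc) = _\<close>)
  moreover have "ln d + ln \<gamma>inc \<le> ln Dmax"
  proof -
    have "d * \<gamma>inc \<le> Dmax"
      using d \<gamma>inc by (simp add: pos_le_divide_eq)
    then have "ln (d * \<gamma>inc) \<le> ln Dmax"
      using d \<gamma>inc Dmax_pos by simp
    then show ?thesis
      using d \<gamma>inc by (simp add: ln_mult)
  qed
  then have "min (ln (D 0)) (ln d)
      + ln \<gamma>inc * card {k \<in> {..<Suc K}. ln (D k) < ln d - ln \<gamma>inc \<and> Sc k}
    \<le> ln d + ln (1 / \<gamma>dec)
      * card {k \<in> {..<Suc K}. ln (D k) < ln d + ln (1 / \<gamma>dec) \<and> \<not> Sc k}"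
    by (intro log_walk_count_lower) (use \<gamma>dec \<gamma>inc ln_D_successful ln_D_unsuccessful in auto)
  moreover have "min (ln (D 0)) (ln d) = ln d"
    using d by simp
  ultimately have "ln \<gamma>inc * card ?S \<le> ln (1 / \<gamma>dec) * card ?U"
    by simp
  moreover have "0 < ln \<gamma>inc"
    using \<gamma>inc by simp
  ultimately show ?thesis
    by (simp add: field_simps)
qed

end

theorem lemma3p12:
  fixes f :: "real^'n \<Rightarrow> real"
    and grad :: "real^'n \<Rightarrow> real^'n"
    and Hess :: "real^'n \<Rightarrow> real^'n^'n"
    and x :: "nat \<Rightarrow> real^'n"
    and P :: "nat \<Rightarrow> real^'p^'n"
    and g :: "nat \<Rightarrow> real^'p"
    and H :: "nat \<Rightarrow> real^'p^'p"
    and s :: "nat \<Rightarrow> real^'p"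
    and Delta :: "nat \<Rightarrow> real"
    and \<Delta>\<^sub>0 \<Delta>max \<gamma>dec \<gamma>inc \<eta> \<mu> :: real
    and \<kappa>ef \<kappa>eg \<kappa>eh \<kappa>H \<kappa>s flow LH M \<alpha> \<epsilon> :: real
    and K :: nat
  assumes dim: "CARD('p) \<le> CARD('n)"
    and params: "0 < \<Delta>\<^sub>0" "\<Delta>\<^sub>0 \<le> \<Delta>max" "0 < \<gamma>dec" "\<gamma>dec < 1" "1 < \<gamma>inc"
      "0 < \<eta>" "\<eta> < 1" "0 < \<mu>" "0 < \<alpha>" "\<alpha> < 1"
    (* f twice continuously differentiable with gradient grad and Hessian Hess *)
    and f_deriv: "\<And>y. (f has_derivative (\<lambda>h. grad y \<bullet> h)) (at y)"
    and grad_deriv: "\<And>y. (grad has_derivative (\<lambda>h. Hess y *v h)) (at y)"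
    and Hess_cont: "continuous_on UNIV Hess"
    (* (ii) *)
    and f_low: "\<And>y. f y \<ge> flow"
    and Hess_lip: "\<And>y z. opnorm (Hess y - Hess z) \<le> LH * norm (y - z)"
    and Hess_bd: "\<And>k. opnorm (Hess (x k)) \<le> M"
    (* algorithm *)
    and Delta0: "Delta 0 = \<Delta>\<^sub>0"
    and H_sym: "\<And>k. transpose (H k) = H k"
    and fq_pos: "\<kappa>ef > 0" "\<kappa>eg > 0" "\<kappa>eh > 0"
    and fq_f: "\<And>k sh. norm sh \<le> Delta k \<Longrightarrow>
       \<bar>f (x k + P k *v sh) - qmodel (f (x k)) (g k) (H k) sh\<bar> \<le> \<kappa>ef * Delta k ^ 3"
    and fq_g: "\<And>k sh. norm sh \<le> Delta k \<Longrightarrow>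
       norm (transpose (P k) *v grad (x k + P k *v sh) - (g k + H k *v sh)) \<le> \<kappa>eg * Delta k ^ 2"
    and fq_H: "\<And>k sh. norm sh \<le> Delta k \<Longrightarrow>
       opnorm (transpose (P k) ** Hess (x k + P k *v sh) ** P k - H k) \<le> \<kappa>eh * Delta k"
    and step_bd: "\<And>k. norm (s k) \<le> Delta k"
    and x_upd: "\<And>k. x (Suc k) =
       (if successful \<eta> \<mu> f (x k) (P k) (g k) (H k) (s k) (Delta k)
        then x k + P k *v s k else x k)"
    and Delta_upd: "\<And>k. Delta (Suc k) =
       (if successful \<eta> \<mu> f (x k) (P k) (g k) (H k) (s k) (Delta k)
        then min (\<gamma>inc * Delta k) \<Delta>max else \<gamma>dec * Delta k)"
    (* (i) *)
    and kH: "\<kappa>H \<ge> 1" "\<And>k. opnorm (H k) \<le> \<kappa>H"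
    (* (iii) *)
    and ks: "\<kappa>s > 0"
    and decrease: "\<And>k. qmodel (f (x k)) (g k) (H k) 0 - qmodel (f (x k)) (g k) (H k) (s k)
       \<ge> \<kappa>s * max (norm (g k) * min (Delta k) (norm (g k) / max (opnorm (H k)) 1))
                     (tau_m (H k) * Delta k ^ 2)"
    (* epsilon and theta *)
    and eps: "\<epsilon> > 0"
    and theta: "\<And>k. (1 - \<alpha>)^2 - 4 * M * (real (rank (Hess (x k))) - 1) * \<alpha>^2 / (\<epsilon> * (1 - \<alpha>)^2) > 0"
    and crit: "\<And>k. k \<le> K \<Longrightarrow> crit (grad (x k)) (Hess (x k)) \<ge> \<epsilon>"
  shows
    "(\<forall>\<Delta>. 0 < \<Delta> \<and> \<Delta> \<le> \<Delta>\<^sub>0 \<longrightarrow>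
        real (card {k \<in> {0..K}. Delta k \<ge> \<Delta> / \<gamma>dec \<and>
                 \<not> successful \<eta> \<mu> f (x k) (P k) (g k) (H k) (s k) (Delta k)})
        \<le> (ln \<gamma>inc / ln (1 / \<gamma>dec)) *
             real (card {k \<in> {0..K}. Delta k \<ge> \<Delta> / \<gamma>inc \<and>
                 successful \<eta> \<mu> f (x k) (P k) (g k) (H k) (s k) (Delta k)})
          + ln (\<Delta>\<^sub>0 / \<Delta>) / ln (1 / \<gamma>dec))
   \<and> (\<forall>\<Delta>. 0 < \<Delta> \<and> \<Delta> \<le> min \<Delta>\<^sub>0 (\<Delta>max / \<gamma>inc) \<longrightarrow>
        real (card {k \<in> {0..K}. Delta k < \<Delta> / \<gamma>inc \<and>
                 successful \<eta> \<mu> f (x k) (P k) (g k) (H k) (s k) (Delta k)})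
        \<le> (ln (1 / \<gamma>dec) / ln \<gamma>inc) *
             real (card {k \<in> {0..K}. Delta k < \<Delta> / \<gamma>dec \<and>
                 \<not> successful \<eta> \<mu> f (x k) (P k) (g k) (H k) (s k) (Delta k)}))"
proof -
  interpret trust_region_radius Delta
      "\<lambda>k. successful \<eta> \<mu> f (x k) (P k) (g k) (H k) (s k) (Delta k)" \<gamma>dec \<gamma>inc \<Delta>max
    by unfold_locales (use params Delta0 Delta_upd in auto)
  show ?thesis
    using count_large_unsuccessful_le count_small_successful_le Delta0 by auto
qed

end
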